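(* Let $\Theta$ be a set of trajectory parameters, and for each iteration $j\ge 1$ let $g^j$ be a learned residual dynamics and $\theta^j\in\Theta$ the parameter returned by Bayesian optimization at iteration $j$. Suppose: (i) $\|g^j-g^*\|_\infty\le\epsilon^j$ with $\epsilon^j\to0$ as $j\to\infty$; and (ii) for each $j$, $J_{g^j}(\theta^j)\le\min_{\theta\in\Theta}J_{g^j}(\theta)+\delta(N_{BO})$, where $\delta(N_{BO})$ is a finite suboptimality bound depending on the number $N_{BO}$ of Bayesian optimization evaluations. Suppose moreover that, for every $j$ and every $\theta\in\Theta$, $|J_{g^j}(\theta)-J_{g^*}(\theta)|\le C^j\epsilon^j$ with constants $C^j>0$ that are bounded in $j$. Then, with $J^*=\min_{\theta\in\Theta}J_{g^*}(\theta)$, \[ \limsup_{j\to\infty}J_{g^*}(\theta^j)\le J^*+\delta(N_{BO}). \]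
   Context: $g^*$ denotes the true residual vehicle dynamics (the discrepancy between the true dynamics and a known nominal vehicle model), and $g^j$ the residual dynamics learned at iteration $j$ of an iterative learning scheme. For a residual $g$ and a trajectory parameter $\theta\in\Theta$, $J_g(\theta)$ is the lap time obtained by tracking the trajectory encoded by $\theta$ with a feedback controller in a closed-loop simulation of the vehicle under the nominal dynamics plus residual $g$; thus $J_{g^*}(\theta)$ is the true lap time and $J_{g^j}(\theta)$ the lap time evaluated under the learned model. The minima over $\Theta$ are assumed to exist. The uniform bound $|J_{g^j}-J_{g^*}|\le C^j\epsilon^j$ is the paper's Proposition 1, invoked in the statement of this theorem. *)

theory Defs
  imports "HOL-Analysis.Analysis"
begin

end

theory Submission
  imports Defs
begin

(* If the learned lap time is uniformly within e of the true one on Theta, then an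
   approximate minimiser of the learned lap time with slack d is an approximate minimiser
   of the true lap time with slack d + 2e.  Since e = C^j eps^j <= B eps^j tends to 0,
   the true lap times of the iterates have limit superior at most J^* + d. *)

lemma cINF_le_cINF_add:
  fixes f h :: "'a \<Rightarrow> real"
  assumes "S \<noteq> {}" and "bdd_below (f ` S)" and "\<And>t. t \<in> S \<Longrightarrow> f t \<le> h t + e"
  shows "(INF t\<in>S. f t) \<le> (INF t\<in>S. h t) + e"
proof -
  have "(INF t\<in>S. f t) - e \<le> (INF t\<in>S. h t)"
  proof (rule cINF_greatest[OF assms(1)])
    fix t assume "t \<in> S"
    then have "(INF t\<in>S. f t) \<le> f t" by (rule cINF_lower[OF assms(2)])
    with assms(3)[OF \<open>t \<in> S\<close>] show "(INF t\<in>S. f t) - e \<le> h t" by linarith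
  qed
  then show ?thesis by linarith
qed

lemma approx_minimizer_of_uniformly_close:
  fixes f h :: "'a \<Rightarrow> real"
  assumes "S \<noteq> {}" and "bdd_below (f ` S)"
    and close: "\<And>t. t \<in> S \<Longrightarrow> \<bar>f t - h t\<bar> \<le> e"
    and "x \<in> S" and approx_min: "f x \<le> (INF t\<in>S. f t) + d"
  shows "h x \<le> (INF t\<in>S. h t) + d + 2 * e"
proof -
  have "f t \<le> h t + e" if "t \<in> S" for t using close[OF that] by linarith
  then have "(INF t\<in>S. f t) \<le> (INF t\<in>S. h t) + e" by (rule cINF_le_cINF_add[OF assms(1,2)])
  moreover have "h x \<le> f x + e" using close[OF \<open>x \<in> S\<close>] by linarith
  ultimately show ?thesis using approx_min by linarith
qed

lemma Limsup_le_of_eventually_le_add_tendsto_zero: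
  fixes x r :: "nat \<Rightarrow> real"
  assumes "eventually (\<lambda>j. x j \<le> K + r j) sequentially" and "r \<longlonglongrightarrow> 0"
  shows "limsup (\<lambda>j. ereal (x j)) \<le> ereal K"
proof -
  have "(\<lambda>j. ereal (K + r j)) \<longlonglongrightarrow> ereal K"
    using tendsto_add[OF tendsto_const assms(2), of K] by (simp add: tendsto_ereal)
  then have "limsup (\<lambda>j. ereal (K + r j)) = ereal K" by (simp add: lim_imp_Limsup)
  moreover have "limsup (\<lambda>j. ereal (x j)) \<le> limsup (\<lambda>j. ereal (K + r j))"
    by (rule Limsup_mono) (use assms(1) in \<open>auto elim: eventually_mono\<close>)
  ultimately show ?thesis by simp
qed

theorem theorem1:
  fixes J :: "('x \<Rightarrow> 'v::real_normed_vector) \<Rightarrow> 'p \<Rightarrow> real"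
    and Theta :: "'p set"
    and g :: "nat \<Rightarrow> 'x \<Rightarrow> 'v" and gstar :: "'x \<Rightarrow> 'v"
    and theta :: "nat \<Rightarrow> 'p"
    and eps C :: "nat \<Rightarrow> real"
    and delta :: "nat \<Rightarrow> real" and N_BO :: nat
  assumes min_star: "\<exists>t0\<in>Theta. \<forall>t\<in>Theta. J gstar t0 \<le> J gstar t"
    and min_j: "\<forall>j\<ge>1. \<exists>t0\<in>Theta. \<forall>t\<in>Theta. J (g j) t0 \<le> J (g j) t"
    and theta_in: "\<forall>j\<ge>1. theta j \<in> Theta"
    and sup_err: "\<forall>j\<ge>1. \<forall>x. norm (g j x - gstar x) \<le> eps j"
    and eps_lim: "eps \<longlonglongrightarrow> 0"
    and bo: "\<forall>j\<ge>1. J (g j) (theta j) \<le> (INF t\<in>Theta. J (g j) t) + delta N_BO"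
    and prop1: "\<forall>j\<ge>1. \<forall>t\<in>Theta. \<bar>J (g j) t - J gstar t\<bar> \<le> C j * eps j"
    and C_pos: "\<forall>j\<ge>1. C j > 0"
    and C_bdd: "\<exists>B. \<forall>j\<ge>1. C j \<le> B"
  shows "limsup (\<lambda>j. ereal (J gstar (theta j)))
           \<le> ereal ((INF t\<in>Theta. J gstar t) + delta N_BO)"
proof -
  obtain B where B: "\<forall>j\<ge>1. C j \<le> B" using C_bdd by blast
  have "Theta \<noteq> {}" using min_star by blast
  have "J gstar (theta j) \<le> (INF t\<in>Theta. J gstar t) + delta N_BO + 2 * B * eps j"
    if "j \<ge> 1" for j
  proof -
    have "eps j \<ge> 0" using sup_err that norm_ge_zero order_trans by blast
    then have "C j * eps j \<le> B * eps j" using B that by (simp add: mult_right_mono)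
    moreover have "bdd_below ((\<lambda>t. J (g j) t) ` Theta)"
      using min_j that by (meson bdd_belowI2)
    ultimately show ?thesis
      using approx_minimizer_of_uniformly_close[OF \<open>Theta \<noteq> {}\<close>,
          where f = "J (g j)" and h = "J gstar" and e = "B * eps j"] prop1 theta_in bo that
      by (force simp: mult.assoc)
  qed
  then show ?thesis
    by (intro Limsup_le_of_eventually_le_add_tendsto_zero[where r = "\<lambda>j. 2 * B * eps j"]
        eventually_sequentiallyI[of 1]) (use eps_lim in \<open>auto intro: tendsto_eq_intros\<close>)
qed

end
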